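(* Let $X_1, X_2 \subseteq \mathrm{VF}^n\times\mathrm{VF}^m$ with $\mathrm{pr}_{\le n}X_1=\mathrm{pr}_{\le n}X_2=Z$, let $\bar a\in\mathrm{VF}^n$, and suppose $\lim_{Z\to\bar a}X_i = L_i$ for $i=1,2$. Then $\lim_{Z\to\bar a}(X_1\cup X_2)=L_1\cup L_2$.
   Context: $\mathrm{VF}$ is an algebraically closed valued field with value group $\Gamma$, valuation $v$ and the valuation topology. For $\bar b\in\mathrm{VF}^k$, $\epsilon\in\Gamma$, $\mathfrak{o}(\bar b,\epsilon)=\{\bar c: v(c_i-b_i)>\epsilon\text{ for all }i\}$. For $X\subseteq\mathrm{VF}^n\times\mathrm{VF}^m$, $\mathrm{pr}_{\le n}X$ is its projection to $\mathrm{VF}^n$ and $\mathrm{fib}(X,\bar c)=\{\bar d:(\bar c,\bar d)\in X\}$. A set $L\subseteq\mathrm{VF}^m$ is a limit set of $X$ at $\bar a$ if for every $\epsilon\in\Gamma$ there is $\delta\in\Gamma$ such that whenever $\bar c\in\mathfrak{o}(\bar a,\delta)\cap(\mathrm{pr}_{\le n}X\setminus\{\bar a\})$, $\mathrm{fib}(X,\bar c)\subseteq\bigcup_{\bar b\in L'}\mathfrak{o}(\bar b,\epsilon)$ for some $L'\subseteq L$; it is minimal if no proper subset is a limit set of $X$ at $\bar a$. With $Z=\mathrm{pr}_{\le n}X$, the notation $\lim_{Z\to\bar a}X=L$ means that $L$ is a topologically closed minimal limit set of $X$ at $\bar a$. *)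

theory Defs
  imports "HOL-Computational_Algebra.Polynomial"
begin

text \<open>A valuation on a field 'k with values in an ordered abelian group 'g,
  together with \<infinity>, represented by None (so v 0 = None).\<close>

definition valuation :: "('k::field \<Rightarrow> 'g::linordered_ab_group_add option) \<Rightarrow> bool" where
  "valuation v \<longleftrightarrow>
     (\<forall>x. v x = None \<longleftrightarrow> x = 0) \<and>
     (\<forall>x y g h. v x = Some g \<longrightarrow> v y = Some h \<longrightarrow> v (x * y) = Some (g + h)) \<and>
     (\<forall>x y g h. v x = Some g \<longrightarrow> v y = Some h \<longrightarrow>
        (case v (x + y) of None \<Rightarrow> True | Some k \<Rightarrow> min g h \<le> k))"

definition alg_closed_field :: "'k::field itself \<Rightarrow> bool" where
  "alg_closed_field _ \<longleftrightarrow> (\<forall>p :: 'k poly. degree p > 0 \<longrightarrow> (\<exists>x. poly p x = 0))"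

definition value_group :: "('k::field \<Rightarrow> 'g::linordered_ab_group_add option) \<Rightarrow> 'g set" where
  "value_group v = {g. \<exists>x. x \<noteq> 0 \<and> v x = Some g}"

definition val_gt :: "'g::linorder option \<Rightarrow> 'g \<Rightarrow> bool" where
  "val_gt a e = (case a of None \<Rightarrow> True | Some g \<Rightarrow> e < g)"

definition VF :: "nat \<Rightarrow> 'k list set" where
  "VF k = {x. length x = k}"

definition ball_o :: "('k::field \<Rightarrow> 'g::linordered_ab_group_add option) \<Rightarrow> 'k list \<Rightarrow> 'g \<Rightarrow> 'k list set" where
  "ball_o v b e = {c. length c = length b \<and> (\<forall>i<length b. val_gt (v (c ! i - b ! i)) e)}"

definition pr_le :: "('k list \<times> 'k list) set \<Rightarrow> 'k list set" where
  "pr_le X = fst ` X"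

definition fib :: "('k list \<times> 'k list) set \<Rightarrow> 'k list \<Rightarrow> 'k list set" where
  "fib X c = {d. (c, d) \<in> X}"

definition limit_set ::
  "('k::field \<Rightarrow> 'g::linordered_ab_group_add option) \<Rightarrow> nat \<Rightarrow> ('k list \<times> 'k list) set
     \<Rightarrow> 'k list \<Rightarrow> 'k list set \<Rightarrow> bool" where
  "limit_set v m X a L \<longleftrightarrow> L \<subseteq> VF m \<and>
     (\<forall>e\<in>value_group v. \<exists>d\<in>value_group v.
        \<forall>c \<in> ball_o v a d \<inter> (pr_le X - {a}).
          \<exists>L' \<subseteq> L. fib X c \<subseteq> (\<Union>b\<in>L'. ball_o v b e))"

definition minimal_limit_set ::
  "('k::field \<Rightarrow> 'g::linordered_ab_group_add option) \<Rightarrow> nat \<Rightarrow> ('k list \<times> 'k list) set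
     \<Rightarrow> 'k list \<Rightarrow> 'k list set \<Rightarrow> bool" where
  "minimal_limit_set v m X a L \<longleftrightarrow> limit_set v m X a L \<and>
     (\<forall>L'. L' \<subset> L \<longrightarrow> \<not> limit_set v m X a L')"

definition val_closed ::
  "('k::field \<Rightarrow> 'g::linordered_ab_group_add option) \<Rightarrow> nat \<Rightarrow> 'k list set \<Rightarrow> bool" where
  "val_closed v m L \<longleftrightarrow>
     (\<forall>b\<in>VF m - L. \<exists>e\<in>value_group v. ball_o v b e \<inter> L = {})"

definition is_lim ::
  "('k::field \<Rightarrow> 'g::linordered_ab_group_add option) \<Rightarrow> nat \<Rightarrow> ('k list \<times> 'k list) set
     \<Rightarrow> 'k list \<Rightarrow> 'k list set \<Rightarrow> bool" where
  "is_lim v m X a L \<longleftrightarrow> val_closed v m L \<and> minimal_limit_set v m X a L"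

end

theory Submission
  imports Defs
begin

text \<open>
  L1 \<union> L2 is a limit set of X1 \<union> X2 because each fibre of the union is the union of the
  two fibres, and it is closed as a union of closed sets. For minimality: by the ultrametric
  inequality a ball around a point of L is a ball around any other point of L it contains, so
  a point of a minimal limit set is isolated in it; closedness isolates every point outside a
  limit set as well. If a proper subset L' of L1 \<union> L2 were a limit set of X1 \<union> X2, a missing
  point b, say in L1, would thus be isolated from L1 \<union> L'. As L' is also a limit set of X1,
  the fibres of X1 near a avoid a small ball around b, so L1 - {b} would already be a limit
  set of X1.
\<close>

lemma valuation_uminus:
  assumes "valuation v"
  shows "v (- x) = v x"
proof -
  have zero: "\<And>x. v x = None \<longleftrightarrow> x = 0"
    and mult: "\<And>x y g h. v x = Some g \<Longrightarrow> v y = Some h \<Longrightarrow> v (x * y) = Some (g + h)"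
    using assms unfolding valuation_def by simp_all
  obtain g where g: "v 1 = Some g" using zero by (cases "v 1") auto
  from mult[OF g g] g have "g = 0" by simp
  obtain h where h: "v (-1) = Some h" using zero by (cases "v (-1)") auto
  from mult[OF h h] g \<open>g = 0\<close> have "h = 0" by simp
  show ?thesis
  proof (cases "v x")
    case None
    then show ?thesis using zero by simp
  next
    case (Some k)
    from mult[OF h Some] \<open>h = 0\<close> Some show ?thesis by simp
  qed
qed

lemma valuation_add_val_gt:
  assumes "valuation v" "val_gt (v x) e" "val_gt (v y) e"
  shows "val_gt (v (x + y)) e"
proof (cases "v x = None \<or> v y = None")
  case True
  then show ?thesis using assms unfolding valuation_def by auto
next
  case False
  then obtain g h where g: "v x = Some g" and h: "v y = Some h" by auto
  with assms(2,3) have "e < min g h" by (simp add: val_gt_def)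
  moreover have "case v (x + y) of None \<Rightarrow> True | Some k \<Rightarrow> min g h \<le> k"
    using assms(1) g h unfolding valuation_def by blast
  ultimately show ?thesis
    by (cases "v (x + y)") (auto simp: val_gt_def min_le_iff_disj intro: less_le_trans)
qed

lemma ball_o_sym:
  assumes "valuation v" "c \<in> ball_o v b e"
  shows "b \<in> ball_o v c e"
  using assms valuation_uminus[OF assms(1), of "c ! _ - b ! _"]
  by (auto simp: ball_o_def)

lemma ball_o_trans:
  assumes "valuation v" "x \<in> ball_o v b e" "y \<in> ball_o v x e"
  shows "y \<in> ball_o v b e"
  unfolding ball_o_def
proof (intro CollectI conjI allI impI)
  show "length y = length b" using assms unfolding ball_o_def by simp
  fix i assume "i < length b"
  with assms(2,3) have "val_gt (v (y ! i - x ! i)) e" "val_gt (v (x ! i - b ! i)) e"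
    unfolding ball_o_def by auto
  then have "val_gt (v ((y ! i - x ! i) + (x ! i - b ! i))) e"
    by (rule valuation_add_val_gt[OF assms(1)])
  then show "val_gt (v (y ! i - b ! i)) e" by simp
qed

lemma ball_o_antimono:
  assumes "e \<le> e'"
  shows "ball_o v b e' \<subseteq> ball_o v b e"
proof -
  have "val_gt x e' \<Longrightarrow> val_gt x e" for x
    using assms unfolding val_gt_def by (cases x) auto
  then show ?thesis unfolding ball_o_def by blast
qed

lemma ball_o_max:
  "ball_o v b (max e1 e2) \<subseteq> ball_o v b e1" "ball_o v b (max e1 e2) \<subseteq> ball_o v b e2"
  by (simp_all add: ball_o_antimono)

lemma max_in_value_group:
  "e1 \<in> value_group v \<Longrightarrow> e2 \<in> value_group v \<Longrightarrow> max e1 e2 \<in> value_group v"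
  by (simp add: max_def)

lemma fib_eq_empty_iff: "fib X c = {} \<longleftrightarrow> c \<notin> pr_le X"
  unfolding fib_def pr_le_def by force

text \<open>Fibres over points outside pr_le X are empty, and L' can always be taken to be L.\<close>

lemma limit_set_altdef:
  "limit_set v m X a L \<longleftrightarrow> L \<subseteq> VF m \<and>
     (\<forall>e\<in>value_group v. \<exists>d\<in>value_group v.
        \<forall>c \<in> ball_o v a d - {a}. fib X c \<subseteq> (\<Union>b\<in>L. ball_o v b e))"
proof -
  have "(\<forall>c \<in> B \<inter> (pr_le X - {a}). \<exists>L' \<subseteq> L. fib X c \<subseteq> (\<Union>b\<in>L'. ball_o v b e))
    \<longleftrightarrow> (\<forall>c \<in> B - {a}. fib X c \<subseteq> (\<Union>b\<in>L. ball_o v b e))" for B e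
  proof
    assume cover: "\<forall>c \<in> B \<inter> (pr_le X - {a}). \<exists>L' \<subseteq> L. fib X c \<subseteq> (\<Union>b\<in>L'. ball_o v b e)"
    show "\<forall>c \<in> B - {a}. fib X c \<subseteq> (\<Union>b\<in>L. ball_o v b e)"
    proof
      fix c assume c: "c \<in> B - {a}"
      show "fib X c \<subseteq> (\<Union>b\<in>L. ball_o v b e)"
      proof (cases "c \<in> pr_le X")
        case True
        with c have "c \<in> B \<inter> (pr_le X - {a})" by blast
        then obtain L' where "L' \<subseteq> L" "fib X c \<subseteq> (\<Union>b\<in>L'. ball_o v b e)"
          using cover by (elim ballE exE conjE) auto
        then show ?thesis by blast
      next
        case False
        then show ?thesis by (simp add: fib_eq_empty_iff[symmetric])
      qed
    qed
  next
    assume "\<forall>c \<in> B - {a}. fib X c \<subseteq> (\<Union>b\<in>L. ball_o v b e)"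
    then show "\<forall>c \<in> B \<inter> (pr_le X - {a}). \<exists>L' \<subseteq> L. fib X c \<subseteq> (\<Union>b\<in>L'. ball_o v b e)"
      by blast
  qed
  then show ?thesis unfolding limit_set_def by (simp only:)
qed

lemma limit_setD:
  assumes "limit_set v m X a L" "e \<in> value_group v"
  obtains d where "d \<in> value_group v"
    "\<And>c. c \<in> ball_o v a d \<Longrightarrow> c \<noteq> a \<Longrightarrow> fib X c \<subseteq> (\<Union>b\<in>L. ball_o v b e)"
  using assms unfolding limit_set_altdef by blast

lemma limit_set_subset_VF: "limit_set v m X a L \<Longrightarrow> L \<subseteq> VF m"
  unfolding limit_set_def by simp

lemma limit_set_anti_mono:
  assumes "limit_set v m Y a L" "X \<subseteq> Y"
  shows "limit_set v m X a L"
proof -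
  have "fib X c \<subseteq> fib Y c" for c using assms(2) unfolding fib_def by auto
  with assms(1) show ?thesis unfolding limit_set_altdef by (meson order_trans)
qed

lemma limit_set_Un:
  assumes "limit_set v m X1 a L1" "limit_set v m X2 a L2"
  shows "limit_set v m (X1 \<union> X2) a (L1 \<union> L2)"
  unfolding limit_set_altdef
proof (intro conjI ballI)
  show "L1 \<union> L2 \<subseteq> VF m" using assms by (simp add: limit_set_subset_VF)
next
  fix e assume e: "e \<in> value_group v"
  obtain d1 where d1: "d1 \<in> value_group v"
    "\<And>c. c \<in> ball_o v a d1 \<Longrightarrow> c \<noteq> a \<Longrightarrow> fib X1 c \<subseteq> (\<Union>b\<in>L1. ball_o v b e)"
    using limit_setD[OF assms(1) e] by blast
  obtain d2 where d2: "d2 \<in> value_group v"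
    "\<And>c. c \<in> ball_o v a d2 \<Longrightarrow> c \<noteq> a \<Longrightarrow> fib X2 c \<subseteq> (\<Union>b\<in>L2. ball_o v b e)"
    using limit_setD[OF assms(2) e] by blast
  have "fib (X1 \<union> X2) c \<subseteq> (\<Union>b\<in>L1 \<union> L2. ball_o v b e)"
    if "c \<in> ball_o v a (max d1 d2) - {a}" for c
  proof -
    from that have "c \<in> ball_o v a d1" "c \<in> ball_o v a d2" "c \<noteq> a"
      using ball_o_max[of v a d1 d2] by auto
    then have "fib X1 c \<subseteq> (\<Union>b\<in>L1. ball_o v b e)" "fib X2 c \<subseteq> (\<Union>b\<in>L2. ball_o v b e)"
      using d1(2) d2(2) by simp_all
    moreover have "fib (X1 \<union> X2) c = fib X1 c \<union> fib X2 c" unfolding fib_def by auto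
    ultimately show ?thesis by auto
  qed
  with max_in_value_group[OF d1(1) d2(1)]
  show "\<exists>d\<in>value_group v. \<forall>c \<in> ball_o v a d - {a}.
      fib (X1 \<union> X2) c \<subseteq> (\<Union>b\<in>L1 \<union> L2. ball_o v b e)"
    by (intro bexI[of _ "max d1 d2"] ballI)
qed

lemma val_closed_Un:
  assumes "val_closed v m L1" "val_closed v m L2"
  shows "val_closed v m (L1 \<union> L2)"
  unfolding val_closed_def
proof
  fix b assume "b \<in> VF m - (L1 \<union> L2)"
  then obtain e1 e2 where "e1 \<in> value_group v" "ball_o v b e1 \<inter> L1 = {}"
    and "e2 \<in> value_group v" "ball_o v b e2 \<inter> L2 = {}"
    using assms unfolding val_closed_def by blast
  then show "\<exists>e\<in>value_group v. ball_o v b e \<inter> (L1 \<union> L2) = {}"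
    using max_in_value_group ball_o_max[of v b e1 e2] by blast
qed

definition isolated_in ::
  "('k::field \<Rightarrow> 'g::linordered_ab_group_add option) \<Rightarrow> 'k list \<Rightarrow> 'k list set \<Rightarrow> bool" where
  "isolated_in v b L \<longleftrightarrow> (\<exists>e\<in>value_group v. ball_o v b e \<inter> L \<subseteq> {b})"

lemma isolated_in_subset:
  "isolated_in v b L \<Longrightarrow> L' \<subseteq> L \<Longrightarrow> isolated_in v b L'"
  unfolding isolated_in_def by blast

lemma isolated_in_Un:
  assumes "isolated_in v b L1" "isolated_in v b L2"
  shows "isolated_in v b (L1 \<union> L2)"
proof -
  obtain e1 e2 where "e1 \<in> value_group v" "ball_o v b e1 \<inter> L1 \<subseteq> {b}"
    and "e2 \<in> value_group v" "ball_o v b e2 \<inter> L2 \<subseteq> {b}"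
    using assms unfolding isolated_in_def by blast
  then show ?thesis
    unfolding isolated_in_def using max_in_value_group ball_o_max[of v b e1 e2] by blast
qed

lemma limit_set_Diff_not_isolated:
  assumes val: "valuation v" and lim: "limit_set v m X a L" and "\<not> isolated_in v b L"
  shows "limit_set v m X a (L - {b})"
  unfolding limit_set_altdef
proof (intro conjI ballI)
  show "L - {b} \<subseteq> VF m" using limit_set_subset_VF[OF lim] by blast
next
  fix e assume e: "e \<in> value_group v"
  \<comment> \<open>by the ultrametric inequality, the ball around b is also the ball around some other point of L\<close>
  obtain b' where b': "b' \<in> L - {b}" "b' \<in> ball_o v b e"
    using \<open>\<not> isolated_in v b L\<close> e unfolding isolated_in_def by blast
  have "ball_o v b e \<subseteq> ball_o v b' e"
    using ball_o_trans[OF val ball_o_sym[OF val b'(2)]] by blast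
  with b'(1) have cover: "(\<Union>b\<in>L. ball_o v b e) \<subseteq> (\<Union>b\<in>L - {b}. ball_o v b e)" by blast
  obtain d where d: "d \<in> value_group v"
    "\<And>c. c \<in> ball_o v a d \<Longrightarrow> c \<noteq> a \<Longrightarrow> fib X c \<subseteq> (\<Union>b\<in>L. ball_o v b e)"
    using limit_setD[OF lim e] by blast
  have "fib X c \<subseteq> (\<Union>b\<in>L - {b}. ball_o v b e)" if "c \<in> ball_o v a d - {a}" for c
    using d(2)[of c] that cover by blast
  with d(1) show "\<exists>d\<in>value_group v. \<forall>c \<in> ball_o v a d - {a}.
      fib X c \<subseteq> (\<Union>b\<in>L - {b}. ball_o v b e)" by blast
qed

lemma minimal_limit_set_isolated_in:
  assumes "valuation v" "minimal_limit_set v m X a L" "b \<in> L"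
  shows "isolated_in v b L"
proof (rule ccontr)
  assume "\<not> isolated_in v b L"
  with assms(1,2) have "limit_set v m X a (L - {b})"
    unfolding minimal_limit_set_def by (blast intro: limit_set_Diff_not_isolated)
  moreover have "L - {b} \<subset> L" using assms(3) by blast
  ultimately show False using assms(2) unfolding minimal_limit_set_def by blast
qed

lemma is_lim_isolated_in:
  assumes "valuation v" "is_lim v m X a L" "b \<in> VF m"
  shows "isolated_in v b L"
proof (cases "b \<in> L")
  case True
  moreover have "minimal_limit_set v m X a L" using assms(2) unfolding is_lim_def by simp
  ultimately show ?thesis using minimal_limit_set_isolated_in[OF assms(1)] by simp
next
  case False
  moreover have "val_closed v m L" using assms(2) unfolding is_lim_def by simp
  ultimately obtain e where "e \<in> value_group v" "ball_o v b e \<inter> L = {}"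
    using assms(3) unfolding val_closed_def by blast
  then show ?thesis unfolding isolated_in_def by blast
qed

lemma limit_set_Diff_isolated:
  assumes val: "valuation v" and lim: "limit_set v m X a L" "limit_set v m X a L'"
    and "b \<notin> L'" and "isolated_in v b (L \<union> L')"
  shows "limit_set v m X a (L - {b})"
  unfolding limit_set_altdef
proof (intro conjI ballI)
  show "L - {b} \<subseteq> VF m" using limit_set_subset_VF[OF lim(1)] by blast
next
  obtain e0 where e0: "e0 \<in> value_group v" "ball_o v b e0 \<inter> (L \<union> L') \<subseteq> {b}"
    using \<open>isolated_in v b (L \<union> L')\<close> unfolding isolated_in_def by blast
  fix e assume "e \<in> value_group v"
  define e' where "e' = max e e0"
  have e': "e' \<in> value_group v"
    unfolding e'_def using \<open>e \<in> value_group v\<close> e0(1) by (rule max_in_value_group)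
  obtain d1 where d1: "d1 \<in> value_group v"
    "\<And>c. c \<in> ball_o v a d1 \<Longrightarrow> c \<noteq> a \<Longrightarrow> fib X c \<subseteq> (\<Union>b\<in>L. ball_o v b e')"
    using limit_setD[OF lim(1) e'] by blast
  obtain d2 where d2: "d2 \<in> value_group v"
    "\<And>c. c \<in> ball_o v a d2 \<Longrightarrow> c \<noteq> a \<Longrightarrow> fib X c \<subseteq> (\<Union>b\<in>L'. ball_o v b e')"
    using limit_setD[OF lim(2) e'] by blast
  have "y \<in> (\<Union>b\<in>L - {b}. ball_o v b e)"
    if c: "c \<in> ball_o v a (max d1 d2) - {a}" and y: "y \<in> fib X c" for c y
  proof -
    from c have "c \<in> ball_o v a d1" "c \<in> ball_o v a d2" "c \<noteq> a"
      using ball_o_max[of v a d1 d2] by auto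
    with d1(2) d2(2) y obtain b1 b2 where b1: "b1 \<in> L" "y \<in> ball_o v b1 e'"
      and b2: "b2 \<in> L'" "y \<in> ball_o v b2 e'"
      by blast
    \<comment> \<open>y lies near a point of L', which is far from b; so the point of L near y is not b\<close>
    have "b1 \<noteq> b"
    proof
      assume "b1 = b"
      then have "b2 \<in> ball_o v b e'"
        using ball_o_trans[OF val b1(2) ball_o_sym[OF val b2(2)]] by simp
      then have "b2 \<in> ball_o v b e0" using ball_o_max(2) unfolding e'_def by blast
      then show False using e0(2) b2(1) \<open>b \<notin> L'\<close> by blast
    qed
    moreover have "ball_o v b1 e' \<subseteq> ball_o v b1 e" unfolding e'_def by (rule ball_o_max)
    ultimately show ?thesis using b1 by blast
  qed
  with max_in_value_group[OF d1(1) d2(1)]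
  show "\<exists>d\<in>value_group v. \<forall>c \<in> ball_o v a d - {a}.
      fib X c \<subseteq> (\<Union>b\<in>L - {b}. ball_o v b e)"
    by (intro bexI[of _ "max d1 d2"] ballI subsetI)
qed

lemma is_lim_not_superset_limit_set:
  assumes val: "valuation v" and lim: "is_lim v m X a L" and "X \<subseteq> Y"
    and lim': "limit_set v m Y a L'"
    and "b \<in> L" "b \<notin> L'" "isolated_in v b (L \<union> L')"
  shows False
proof -
  have min: "minimal_limit_set v m X a L" using lim unfolding is_lim_def by simp
  then have "limit_set v m X a L" unfolding minimal_limit_set_def by simp
  moreover have "limit_set v m X a L'" using lim' \<open>X \<subseteq> Y\<close> by (rule limit_set_anti_mono)
  ultimately have "limit_set v m X a (L - {b})"
    using val \<open>b \<notin> L'\<close> \<open>isolated_in v b (L \<union> L')\<close> by (intro limit_set_Diff_isolated)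
  moreover have "L - {b} \<subset> L" using \<open>b \<in> L\<close> by blast
  ultimately show False using min unfolding minimal_limit_set_def by blast
qed

theorem lemma3p3:
  fixes v :: "'k::field \<Rightarrow> 'g::linordered_ab_group_add option"
    and n m :: nat
    and X1 X2 :: "('k list \<times> 'k list) set"
    and Z :: "'k list set"
    and a :: "'k list"
    and L1 L2 :: "'k list set"
  assumes "valuation v"
    and "alg_closed_field TYPE('k)"
    and "X1 \<subseteq> VF n \<times> VF m" and "X2 \<subseteq> VF n \<times> VF m"
    and "pr_le X1 = Z" and "pr_le X2 = Z"
    and "a \<in> VF n"
    and "is_lim v m X1 a L1" and "is_lim v m X2 a L2"
  shows "is_lim v m (X1 \<union> X2) a (L1 \<union> L2)"
proof -
  note val = \<open>valuation v\<close> and lim = \<open>is_lim v m X1 a L1\<close> \<open>is_lim v m X2 a L2\<close>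
  have lim_set: "limit_set v m X1 a L1" "limit_set v m X2 a L2"
    using lim unfolding is_lim_def minimal_limit_set_def by simp_all
  have "\<not> limit_set v m (X1 \<union> X2) a L'" if "L' \<subset> L1 \<union> L2" for L'
  proof
    assume L': "limit_set v m (X1 \<union> X2) a L'"
    obtain b where b: "b \<in> L1 \<union> L2" "b \<notin> L'" using \<open>L' \<subset> L1 \<union> L2\<close> by blast
    with lim_set have "b \<in> VF m" using limit_set_subset_VF by blast
    then have "isolated_in v b (L1 \<union> L2)"
      using is_lim_isolated_in[OF val lim(1)] is_lim_isolated_in[OF val lim(2)]
      by (intro isolated_in_Un)
    moreover have "L1 \<union> L' \<subseteq> L1 \<union> L2" "L2 \<union> L' \<subseteq> L1 \<union> L2" using \<open>L' \<subset> L1 \<union> L2\<close> by auto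
    ultimately have "isolated_in v b (L1 \<union> L')" "isolated_in v b (L2 \<union> L')"
      by (blast intro: isolated_in_subset)+
    with b show False
      using is_lim_not_superset_limit_set[OF val lim(1) _ L']
        is_lim_not_superset_limit_set[OF val lim(2) _ L'] by blast
  qed
  moreover have "val_closed v m (L1 \<union> L2)"
    using lim val_closed_Un unfolding is_lim_def by blast
  ultimately show ?thesis
    unfolding is_lim_def minimal_limit_set_def using limit_set_Un[OF lim_set] by blast
qed

end
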